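(* Let $G=(V,E)$ be a graph with nonnegative edge lengths $l_e$, root $r$, and integer demands $d_v>0$ on a set of demand nodes, with total demand $D$. Fix $\epsilon>0$, $\gamma>1$, $\delta>1$, let $K=\lceil \log_{1+\epsilon} D\rceil$, $M_i=(1+\epsilon)^i$, $A_i(x)=\min\{x,M_i\}$, and let $T_i^*$ be an optimal routing tree for $A_i$ ($0\le i\le K$). Run the following procedure: (1) for each $i$ let $T_i$ be a routing tree returned by a deterministic $\lambda$-approximation algorithm for SSRoB with cost function $A_i$; (2) for $i=1,\dots,K$ in increasing order, if $A_i(T_{i-1})<A_i(T_i)$ set $T_i\leftarrow T_{i-1}$; (3) for $i=K-1,\dots,0$ in decreasing order, if $A_i(T_{i+1})<A_i(T_i)$ set $T_i\leftarrow T_{i+1}$; (4) compute the rent cost $R_i$ and normalized buy cost $B_i$ of each resulting $T_i$; (5) set $L_B=\emptyset$, $B=\infty$, and for $i=0,\dots,K$ in increasing order, if $B_i<B/\gamma$ then add $i$ to $L_B$ and set $B\leftarrow B_i$; (6) set $L=\emptyset$, $R=\infty$, and for each $i\in L_B$ in decreasing order, if $R_i<R/\delta$ then add $i$ to $L$ and set $R\leftarrow R_i$. Suppose there exist a routing tree $T$ and constants $c_B,c_R$ such that for every $i\in L$ there is a partition of the edges of $T$ into two sets $T_{B_i}$ and $T_{R_i}$ with $A_0(T_{B_i})\le c_B B_i$ and $A_K(T_{R_i})\le c_R R_i$. Then for all $k\in\{0,\dots,K\}$, $A_k(T)\le \max\{c_B\gamma,\,c_R\delta\}\,\lambda\, A_k(T_k^*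 )$.
   Context: A routing tree is a tree in $G$ containing $r$ and all demand nodes; each demand node $v$ sends $d_v$ units of flow to $r$ along its unique tree path, and $x_e$ denotes the total flow on edge $e$. For a function $f$ and a routing tree $T$, $f(T)=\sum_{e\in T} l_e f(x_e)$; for a subset $S$ of edges of $T$, $f(S)=\sum_{e\in S} l_e f(x_e)$ with $x_e$ the flows in $T$. The single-sink rent-or-buy (SSRoB) problem with parameter $M$ is to find a routing tree minimizing $A(T)$ for $A(x)=\min\{x,M\}$; a $\lambda$-approximation algorithm returns a routing tree of cost at most $\lambda$ times optimal. For a routing tree $T_i$ with flows $x_e$, its rent cost is $R_i=\sum_{e\in T_i,\,x_e<M_i} l_e A_i(x_e)$ and its normalized buy cost is $B_i=\sum_{e\in T_i,\,x_e\ge M_i} l_e$. *)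

theory Defs
  imports Complex_Main
begin

text \<open>Undirected edges are two-element vertex sets.  Connectivity of vertices u, w
using only the edges of the edge set S (reflexive-transitive closure).\<close>
definition conn :: "'a set set \<Rightarrow> 'a \<Rightarrow> 'a \<Rightarrow> bool" where
  "conn S u w \<longleftrightarrow> (u, w) \<in> {(a, b). {a, b} \<in> S}\<^sup>*"

text \<open>Routing tree: a tree in G (edges from E, connected, acyclic = every edge is a bridge)
containing the root r and all demand nodes.\<close>
definition routing_tree :: "'a set set \<Rightarrow> 'a \<Rightarrow> 'a set \<Rightarrow> 'a set set \<Rightarrow> bool" where
  "routing_tree E r Dem T \<longleftrightarrow>
     T \<subseteq> E \<and> finite T \<and>
     (\<forall>v\<in>Dem. conn T v r) \<and>
     (\<forall>e\<in>T. \<forall>u\<in>e. conn T u r) \<and>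
     (\<forall>e\<in>T. \<forall>u\<in>e. \<forall>w\<in>e. u \<noteq> w \<longrightarrow> \<not> conn (T - {e}) u w)"

text \<open>Flow on edge e of tree T: total demand of the demand nodes whose (unique) tree path
to r uses e, i.e. which are separated from r by deleting e.\<close>
definition flow :: "'a \<Rightarrow> 'a set \<Rightarrow> ('a \<Rightarrow> nat) \<Rightarrow> 'a set set \<Rightarrow> 'a set \<Rightarrow> real" where
  "flow r Dem d T e = (\<Sum>v\<in>Dem. if conn (T - {e}) v r then 0 else real (d v))"

definition costS :: "'a \<Rightarrow> 'a set \<Rightarrow> ('a \<Rightarrow> nat) \<Rightarrow> ('a set \<Rightarrow> real) \<Rightarrow> (real \<Rightarrow> real)
      \<Rightarrow> 'a set set \<Rightarrow> 'a set set \<Rightarrow> real" where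
  "costS r Dem d l f T S = (\<Sum>e\<in>S. l e * f (flow r Dem d T e))"

abbreviation cost where
  "cost r Dem d l f T \<equiv> costS r Dem d l f T T"

definition Mth :: "real \<Rightarrow> nat \<Rightarrow> real" where
  "Mth \<epsilon> i = (1 + \<epsilon>) ^ i"

definition Acost :: "real \<Rightarrow> nat \<Rightarrow> real \<Rightarrow> real" where
  "Acost \<epsilon> i x = min x (Mth \<epsilon> i)"

fun fwd :: "(nat \<Rightarrow> 'a set set \<Rightarrow> real) \<Rightarrow> (nat \<Rightarrow> 'a set set) \<Rightarrow> nat \<Rightarrow> 'a set set" where
  "fwd C T0 0 = T0 0"
| "fwd C T0 (Suc i) = (if C (Suc i) (fwd C T0 i) < C (Suc i) (T0 (Suc i))
                        then fwd C T0 i else T0 (Suc i))"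

text \<open>Step (3): backward pass, i = K-1..0 decreasing, in place;
  bwd C T1 K n is the tree at index K - n.\<close>
fun bwd :: "(nat \<Rightarrow> 'a set set \<Rightarrow> real) \<Rightarrow> (nat \<Rightarrow> 'a set set) \<Rightarrow> nat \<Rightarrow> nat \<Rightarrow> 'a set set" where
  "bwd C T1 K 0 = T1 K"
| "bwd C T1 K (Suc n) = (if C (K - Suc n) (bwd C T1 K n) < C (K - Suc n) (T1 (K - Suc n))
                          then bwd C T1 K n else T1 (K - Suc n))"

definition final_trees :: "(nat \<Rightarrow> 'a set set \<Rightarrow> real) \<Rightarrow> (nat \<Rightarrow> 'a set set) \<Rightarrow> nat \<Rightarrow> nat \<Rightarrow> 'a set set" where
  "final_trees C T0 K i = bwd C (fwd C T0) K (K - i)"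

text \<open>Steps (5),(6): scan indices in the given order, with current threshold
  (None = infinity); select i if val i < threshold / c and update the threshold.\<close>
fun scan :: "(nat \<Rightarrow> real) \<Rightarrow> real \<Rightarrow> real option \<Rightarrow> nat list \<Rightarrow> nat list" where
  "scan f c b [] = []"
| "scan f c b (i # is) =
     (if (case b of None \<Rightarrow> True | Some t \<Rightarrow> f i < t / c)
      then i # scan f c (Some (f i)) is else scan f c b is)"

end

theory Submission
  imports Defs
begin

text \<open>
  After the two passes every tree is locally optimal: \<open>A_i(T_i) \<le> A_i(T_{i+1})\<close> and
  \<open>A_{i+1}(T_{i+1}) \<le> A_{i+1}(T_i)\<close>. Comparing capped costs at the thresholds
  \<open>M_i < M_{i+1}\<close> turns this into monotonicity: \<open>B_i\<close> is nonincreasing and \<open>R_i\<close>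
  nondecreasing in \<open>i\<close>. Hence the two greedy scans leave, for every \<open>k\<close>, an index \<open>i \<in> L\<close>
  with \<open>B_i \<le> \<gamma> B_k\<close> and \<open>R_i \<le> \<delta> R_k\<close>. Since flows are integral,
  \<open>A_k(x) \<le> M_k A_0(x)\<close>, and \<open>A_k \<le> A_K\<close>; so with \<open>m = max (c_B \<gamma>) (c_R \<delta>)\<close>
  \<open>A_k(T) \<le> M_k c_B B_i + c_R R_i \<le> m (M_k B_k + R_k) = m A_k(T_k) \<le> m \<lambda> A_k(T\<^sup>*_k)\<close>.
\<close>

section \<open>Greedy selection\<close>

lemma set_scan_subset: "set (scan f c b xs) \<subseteq> set xs"
  by (induction xs arbitrary: b) auto

lemma sorted_wrt_scan: "sorted_wrt Q xs \<Longrightarrow> sorted_wrt Q (scan f c b xs)"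
  by (induction xs arbitrary: b) (auto dest: set_scan_subset[THEN subsetD])

lemma scan_cover:
  fixes f :: "nat \<Rightarrow> real"
  assumes "1 \<le> c" "\<And>z. z \<in> set xs \<Longrightarrow> 0 \<le> f z" "sorted_wrt Q xs" "\<And>z. Q z z" "x \<in> set xs"
  shows "(\<exists>j\<in>set (scan f c b xs). Q j x \<and> f j \<le> c * f x) \<or> (\<exists>t. b = Some t \<and> t \<le> c * f x)"
  using assms(2-)
proof (induction xs arbitrary: b)
  case Nil
  then show ?case by simp
next
  case (Cons y ys)
  let ?selected = "case b of None \<Rightarrow> True | Some t \<Rightarrow> f y < t / c"
  have rejected: "\<exists>t. b = Some t \<and> t \<le> c * f y" if "\<not> ?selected"
    using that \<open>1 \<le> c\<close> by (cases b) (auto simp: field_simps)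
  show ?case
  proof (cases "x = y")
    case True
    have "f y \<le> c * f y"
      using mult_right_mono[OF \<open>1 \<le> c\<close>, of "f y"] Cons.prems(1) by simp
    then show ?thesis
      using True rejected Cons.prems(3) by auto
  next
    case False
    then have "x \<in> set ys"
      using Cons.prems(4) by simp
    then show ?thesis
      using Cons.IH[of "Some (f y)"] Cons.IH[of b] Cons.prems(1-3) by (cases ?selected) auto
  qed
qed

lemma two_stage_scan_cover:
  fixes f g :: "nat \<Rightarrow> real"
  assumes "1 \<le> \<gamma>" "1 \<le> \<delta>"
    and f_antimono: "\<And>i j. i \<le> j \<Longrightarrow> j \<le> K \<Longrightarrow> f j \<le> f i"
    and g_mono: "\<And>i j. i \<le> j \<Longrightarrow> j \<le> K \<Longrightarrow> g i \<le> g j"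
    and f_nonneg: "\<And>i. i \<le> K \<Longrightarrow> 0 \<le> f i"
    and g_nonneg: "\<And>i. i \<le> K \<Longrightarrow> 0 \<le> g i"
    and "k \<le> K"
  shows "\<exists>i\<in>set (scan g \<delta> None (rev (scan f \<gamma> None [0..<K+1]))). f i \<le> \<gamma> * f k \<and> g i \<le> \<delta> * g k"
proof -
  define LB where "LB = scan f \<gamma> None [0..<K+1]"
  have LB_range: "set LB \<subseteq> {..K}"
    unfolding LB_def using set_scan_subset[of f \<gamma> None "[0..<K+1]"] by auto
  have "sorted_wrt (\<le>) [0..<K+1]"
    by (rule sorted_wrt_mono_rel[OF _ sorted_wrt_upt]) simp
  then have "sorted_wrt (\<le>) LB"
    unfolding LB_def by (rule sorted_wrt_scan)
  obtain j where j: "j \<in> set LB" "j \<le> k" "f j \<le> \<gamma> * f k"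
    using scan_cover[of \<gamma> "[0..<K+1]" f "(\<le>)" k None] \<open>sorted_wrt (\<le>) [0..<K+1]\<close>
      \<open>1 \<le> \<gamma>\<close> f_nonneg \<open>k \<le> K\<close> unfolding LB_def by (auto simp del: upt_Suc)
  obtain i where i: "i \<in> set (scan g \<delta> None (rev LB))" "j \<le> i" "g i \<le> \<delta> * g j"
    using scan_cover[of \<delta> "rev LB" g "\<lambda>a b. b \<le> a" j None] \<open>sorted_wrt (\<le>) LB\<close>
      \<open>1 \<le> \<delta>\<close> g_nonneg LB_range j(1) by (auto simp: sorted_wrt_rev)
  have "i \<le> K"
    using i(1) LB_range set_scan_subset[of g \<delta> None "rev LB"] by auto
  have "f i \<le> \<gamma> * f k"
    using f_antimono[OF i(2) \<open>i \<le> K\<close>] j(3) by linarith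
  moreover have "g i \<le> \<delta> * g k"
    using i(3) g_mono[OF j(2) \<open>k \<le> K\<close>] \<open>1 \<le> \<delta>\<close> by (smt (verit) mult_left_mono)
  ultimately show ?thesis
    using i(1) unfolding LB_def by blast
qed

section \<open>The forward and backward passes\<close>

lemma fwd_in_range: "fwd C T0 i \<in> T0 ` {..i}"
  by (induction i) auto

lemma bwd_in_range: "bwd C T1 K n \<in> T1 ` {..K}"
  by (induction n) auto

lemma final_trees_in_range: "final_trees C T0 K i \<in> T0 ` {..K}"
proof -
  obtain j where "j \<le> K" "final_trees C T0 K i = fwd C T0 j"
    using bwd_in_range[of C "fwd C T0" K "K - i"] unfolding final_trees_def by auto
  then show ?thesis
    using fwd_in_range[of C T0 j] by auto
qed

lemma fwd_Suc_le: "C (Suc i) (fwd C T0 (Suc i)) \<le> C (Suc i) (fwd C T0 i)"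
  by auto

lemma final_trees_last: "final_trees C T0 K K = fwd C T0 K"
  by (simp add: final_trees_def)

lemma final_trees_step:
  assumes "i < K"
  shows "final_trees C T0 K i =
    (if C i (final_trees C T0 K (Suc i)) < C i (fwd C T0 i)
     then final_trees C T0 K (Suc i) else fwd C T0 i)"
proof -
  have "K - i = Suc (K - Suc i)" "K - Suc (K - Suc i) = i"
    using assms by auto
  then show ?thesis
    unfolding final_trees_def by simp
qed

lemma final_trees_le_fwd: "i \<le> K \<Longrightarrow> C i (final_trees C T0 K i) \<le> C i (fwd C T0 i)"
  by (cases "i = K") (auto simp: final_trees_last final_trees_step)

lemma final_trees_le_initial: "i \<le> K \<Longrightarrow> C i (final_trees C T0 K i) \<le> C i (T0 i)"
  using final_trees_le_fwd[of i K C T0] by (cases i) (auto split: if_splits)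

lemma final_trees_locally_optimal:
  assumes "i < K"
  shows "C i (final_trees C T0 K i) \<le> C i (final_trees C T0 K (Suc i))"
    and "C (Suc i) (final_trees C T0 K (Suc i)) \<le> C (Suc i) (final_trees C T0 K i)"
proof -
  show "C i (final_trees C T0 K i) \<le> C i (final_trees C T0 K (Suc i))"
    using final_trees_step[OF assms, of C T0] by auto
  have "C (Suc i) (final_trees C T0 K (Suc i)) \<le> C (Suc i) (fwd C T0 i)"
    using final_trees_le_fwd[of "Suc i" K C T0] fwd_Suc_le[of C i T0] assms by linarith
  then show "C (Suc i) (final_trees C T0 K (Suc i)) \<le> C (Suc i) (final_trees C T0 K i)"
    using final_trees_step[OF assms, of C T0] by auto
qed

section \<open>Capped costs\<close>

definition capped_cost :: "('e \<Rightarrow> real) \<Rightarrow> ('e \<Rightarrow> real) \<Rightarrow> real \<Rightarrow> 'e set \<Rightarrow> real" where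
  "capped_cost l x M S = (\<Sum>e\<in>S. l e * min (x e) M)"

definition rent_cost :: "('e \<Rightarrow> real) \<Rightarrow> ('e \<Rightarrow> real) \<Rightarrow> real \<Rightarrow> 'e set \<Rightarrow> real" where
  "rent_cost l x M S = (\<Sum>e\<in>{e\<in>S. x e < M}. l e * min (x e) M)"

definition norm_buy_cost :: "('e \<Rightarrow> real) \<Rightarrow> ('e \<Rightarrow> real) \<Rightarrow> real \<Rightarrow> 'e set \<Rightarrow> real" where
  "norm_buy_cost l x M S = (\<Sum>e\<in>{e\<in>S. M \<le> x e}. l e)"

lemma capped_cost_split:
  assumes "finite S"
  shows "capped_cost l x M S = rent_cost l x M S + M * norm_buy_cost l x M S"
  unfolding capped_cost_def rent_cost_def norm_buy_cost_def sum.inter_filter[OF assms]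
    sum_distrib_left sum.distrib[symmetric]
  by (rule sum.cong) (auto simp: min_def)

lemma weighted_min_increment_bounds:
  fixes a x M1 M2 :: real
  assumes "0 \<le> a" "M1 \<le> M2"
  shows "(M2 - M1) * (if M2 \<le> x then a else 0) \<le> a * min x M2 - a * min x M1"
    and "a * min x M2 - a * min x M1 \<le> (M2 - M1) * (if M1 \<le> x then a else 0)"
proof -
  have "a * (if M2 \<le> x then M2 - M1 else 0) \<le> a * (min x M2 - min x M1)"
    and "a * (min x M2 - min x M1) \<le> a * (if M1 \<le> x then M2 - M1 else 0)"
    using assms by (auto intro!: mult_left_mono simp: min_def)
  then show "(M2 - M1) * (if M2 \<le> x then a else 0) \<le> a * min x M2 - a * min x M1"
    and "a * min x M2 - a * min x M1 \<le> (M2 - M1) * (if M1 \<le> x then a else 0)"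
    by (auto simp: algebra_simps split: if_splits)
qed

lemma weighted_min_ratio_bounds:
  fixes a x M1 M2 :: real
  assumes "0 \<le> a" "0 \<le> x" "0 < M1" "M1 \<le> M2"
  shows "(1/M1 - 1/M2) * (if x < M1 then a * min x M1 else 0) \<le> a * min x M1 / M1 - a * min x M2 / M2"
      (is ?lower)
    and "a * min x M1 / M1 - a * min x M2 / M2 \<le> (1/M1 - 1/M2) * (if x < M2 then a * min x M2 else 0)"
      (is ?upper)
proof -
  have "0 < M2"
    using assms by linarith
  have eq: "(1/M1 - 1/M2) * (a * x) = a * x / M1 - a * x / M2"
    by (simp add: algebra_simps)
  consider "x < M1" | "M1 \<le> x" "x < M2" | "M2 \<le> x"
    by linarith
  then have "?lower \<and> ?upper"
  proof cases
    case 1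
    then show ?thesis using eq assms by (simp add: min_def)
  next
    case 2
    have "a * x \<le> a * M2" and "a * M1 \<le> a * x"
      using 2 assms by (simp_all add: mult_left_mono)
    then have "a * x / M2 \<le> a" and "a \<le> a * x / M1"
      using assms \<open>0 < M2\<close> by (simp_all add: divide_le_eq le_divide_eq)
    then show ?thesis using 2 eq assms by (auto simp: min_def)
  next
    case 3
    then show ?thesis using assms \<open>0 < M2\<close> by (simp add: min_def)
  qed
  then show ?lower ?upper by auto
qed

lemma capped_cost_increment_bounds:
  assumes "finite S" "\<And>e. e \<in> S \<Longrightarrow> 0 \<le> l e" "M1 \<le> M2"
  shows "(M2 - M1) * norm_buy_cost l x M2 S \<le> capped_cost l x M2 S - capped_cost l x M1 S"
    and "capped_cost l x M2 S - capped_cost l x M1 S \<le> (M2 - M1) * norm_buy_cost l x M1 S"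
  unfolding capped_cost_def norm_buy_cost_def sum.inter_filter[OF assms(1)] sum_distrib_left
    sum_subtractf[symmetric]
  by (rule sum_mono; use assms(2,3) weighted_min_increment_bounds in auto)+

lemma capped_cost_ratio_bounds:
  assumes "finite S" "\<And>e. e \<in> S \<Longrightarrow> 0 \<le> l e" "\<And>e. e \<in> S \<Longrightarrow> 0 \<le> x e" "0 < M1" "M1 \<le> M2"
  shows "(1/M1 - 1/M2) * rent_cost l x M1 S \<le> capped_cost l x M1 S / M1 - capped_cost l x M2 S / M2"
    and "capped_cost l x M1 S / M1 - capped_cost l x M2 S / M2 \<le> (1/M1 - 1/M2) * rent_cost l x M2 S"
  unfolding capped_cost_def rent_cost_def sum.inter_filter[OF assms(1)] sum_distrib_left
    sum_divide_distrib sum_subtractf[symmetric]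
  by (rule sum_mono; use assms(2-5) weighted_min_ratio_bounds in auto)+

text \<open>
  The buy part bounds how much the capped cost grows from threshold \<open>M1\<close> to \<open>M2\<close>, the rent
  part how much the capped cost per unit of threshold shrinks; cost comparisons at both
  thresholds therefore transfer to these parts.
\<close>

lemma capped_cost_exchange:
  assumes S: "finite S" "\<And>e. e \<in> S \<Longrightarrow> 0 \<le> l e" "\<And>e. e \<in> S \<Longrightarrow> 0 \<le> x e"
    and S': "finite S'" "\<And>e. e \<in> S' \<Longrightarrow> 0 \<le> l e" "\<And>e. e \<in> S' \<Longrightarrow> 0 \<le> x' e"
    and M: "0 < M1" "M1 < M2"
    and le1: "capped_cost l x M1 S \<le> capped_cost l x' M1 S'"
    and le2: "capped_cost l x' M2 S' \<le> capped_cost l x M2 S"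
  shows "norm_buy_cost l x' M2 S' \<le> norm_buy_cost l x M1 S"
    and "rent_cost l x M1 S \<le> rent_cost l x' M2 S'"
proof -
  have "(M2 - M1) * norm_buy_cost l x' M2 S' \<le> capped_cost l x' M2 S' - capped_cost l x' M1 S'"
    using capped_cost_increment_bounds(1)[OF S'(1,2)] M by simp
  also have "\<dots> \<le> capped_cost l x M2 S - capped_cost l x M1 S"
    using le1 le2 by simp
  also have "\<dots> \<le> (M2 - M1) * norm_buy_cost l x M1 S"
    using capped_cost_increment_bounds(2)[OF S(1,2)] M by simp
  finally show "norm_buy_cost l x' M2 S' \<le> norm_buy_cost l x M1 S"
    using M by simp
  have "(1/M1 - 1/M2) * rent_cost l x M1 S \<le> capped_cost l x M1 S / M1 - capped_cost l x M2 S / M2"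
    using capped_cost_ratio_bounds(1)[OF S] M by simp
  also have "\<dots> \<le> capped_cost l x' M1 S' / M1 - capped_cost l x' M2 S' / M2"
    using le1 le2 M by (simp add: divide_right_mono diff_mono)
  also have "\<dots> \<le> (1/M1 - 1/M2) * rent_cost l x' M2 S'"
    using capped_cost_ratio_bounds(2)[OF S'] M by simp
  finally show "rent_cost l x M1 S \<le> rent_cost l x' M2 S'"
    using M by (simp add: frac_less2)
qed

lemma capped_cost_eq_0_transfer:
  assumes "finite S" "\<And>e. e \<in> S \<Longrightarrow> 0 \<le> l e" "\<And>e. e \<in> S \<Longrightarrow> 0 \<le> x e" "0 < M" "0 \<le> M'"
    and "capped_cost l x M S = 0"
  shows "capped_cost l x M' S = 0"
proof -
  have "\<forall>e\<in>S. l e * min (x e) M = 0"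
    using assms(6) sum_nonneg_eq_0_iff[OF assms(1), of "\<lambda>e. l e * min (x e) M"] assms(2-4)
    unfolding capped_cost_def by auto
  then have "\<forall>e\<in>S. l e = 0 \<or> x e = 0"
    using assms(4) by (auto simp: min_def split: if_splits)
  then show ?thesis
    using assms(5) unfolding capped_cost_def by (intro sum.neutral ballI) (auto simp: min_def)
qed

section \<open>Single-sink rent-or-buy\<close>

lemma min_of_nat_le_mult: "1 \<le> M \<Longrightarrow> min (real n) M \<le> M * min (real n) 1"
  by (cases n) auto

lemma mult_le_mult_of_scaled:
  fixes b b' c g m :: real
  assumes "0 \<le> b" "0 \<le> b'" "b \<le> g * b'" "c * g \<le> m" "0 \<le> m"
  shows "c * b \<le> m * b'"
proof (cases "0 \<le> c")
  case True
  then have "c * b \<le> (c * g) * b'"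
    using assms(3) by (simp add: mult_left_mono mult.assoc)
  also have "\<dots> \<le> m * b'"
    by (rule mult_right_mono[OF assms(4,2)])
  finally show ?thesis .
next
  case False
  then show ?thesis
    using assms(1,2,5) by (smt (verit) mult_nonneg_nonneg mult_nonpos_nonneg)
qed

lemma Mth_0 [simp]: "Mth \<epsilon> 0 = 1"
  by (simp add: Mth_def)

lemma flow_eq_of_nat: "flow r Dem d S e = real (\<Sum>v\<in>Dem. if conn (S - {e}) v r then 0 else d v)"
  by (simp add: flow_def of_nat_sum if_distrib cong: if_cong)

lemma flow_nonneg: "0 \<le> flow r Dem d S e"
  unfolding flow_def by (auto intro: sum_nonneg)

lemma cost_eq_capped_cost:
  "cost r Dem d l (Acost \<epsilon> i) S = capped_cost l (flow r Dem d S) (Mth \<epsilon> i) S"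
  by (simp add: costS_def Acost_def capped_cost_def)

lemma final_trees_routing_tree:
  assumes "\<And>i. i \<le> K \<Longrightarrow> routing_tree E r Dem (T0 i)"
  shows "routing_tree E r Dem (final_trees C T0 K i)"
  using final_trees_in_range[of C T0 K i] assms by auto

locale rent_or_buy_instance =
  fixes E :: "'a set set" and r :: 'a and Dem :: "'a set" and d :: "'a \<Rightarrow> nat"
    and l :: "'a set \<Rightarrow> real" and \<epsilon> :: real
  assumes lengths_nonneg: "\<forall>e\<in>E. 0 \<le> l e"
    and eps_pos: "0 < \<epsilon>"
begin

abbreviation tree_cost :: "nat \<Rightarrow> 'a set set \<Rightarrow> real" where
  "tree_cost i S \<equiv> cost r Dem d l (Acost \<epsilon> i) S"

abbreviation rent :: "nat \<Rightarrow> 'a set set \<Rightarrow> real" where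
  "rent i S \<equiv> rent_cost l (flow r Dem d S) (Mth \<epsilon> i) S"

abbreviation buy :: "nat \<Rightarrow> 'a set set \<Rightarrow> real" where
  "buy i S \<equiv> norm_buy_cost l (flow r Dem d S) (Mth \<epsilon> i) S"

lemma Mth_pos: "0 < Mth \<epsilon> i"
  using eps_pos by (simp add: Mth_def)

lemma Mth_less_Suc: "Mth \<epsilon> i < Mth \<epsilon> (Suc i)"
  using eps_pos Mth_pos by (simp add: Mth_def)

lemma Mth_mono: "i \<le> j \<Longrightarrow> Mth \<epsilon> i \<le> Mth \<epsilon> j"
  using eps_pos unfolding Mth_def by (intro power_increasing) auto

lemma routing_tree_weights:
  assumes "routing_tree E r Dem S"
  shows "finite S" "\<And>e. e \<in> S \<Longrightarrow> 0 \<le> l e" "\<And>e. e \<in> S \<Longrightarrow> 0 \<le> flow r Dem d S e"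
  using assms lengths_nonneg flow_nonneg unfolding routing_tree_def by auto

lemma tree_cost_split:
  "routing_tree E r Dem S \<Longrightarrow> tree_cost i S = rent i S + Mth \<epsilon> i * buy i S"
  unfolding cost_eq_capped_cost by (rule capped_cost_split) (rule routing_tree_weights)

lemma tree_cost_nonneg: "routing_tree E r Dem S \<Longrightarrow> 0 \<le> tree_cost i S"
  unfolding cost_eq_capped_cost capped_cost_def
  using routing_tree_weights Mth_pos[THEN less_imp_le] by (auto intro!: sum_nonneg)

lemma rent_nonneg: "routing_tree E r Dem S \<Longrightarrow> 0 \<le> rent i S"
  unfolding rent_cost_def using routing_tree_weights Mth_pos[THEN less_imp_le]
  by (auto intro!: sum_nonneg)

lemma buy_nonneg: "routing_tree E r Dem S \<Longrightarrow> 0 \<le> buy i S"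
  unfolding norm_buy_cost_def using routing_tree_weights by (auto intro!: sum_nonneg)

lemma tree_cost_eq_0_transfer:
  "routing_tree E r Dem S \<Longrightarrow> tree_cost i S = 0 \<Longrightarrow> tree_cost k S = 0"
  unfolding cost_eq_capped_cost
  by (rule capped_cost_eq_0_transfer) (use routing_tree_weights Mth_pos Mth_pos[THEN less_imp_le] in auto)

lemma costS_nonneg: "routing_tree E r Dem T \<Longrightarrow> S \<subseteq> T \<Longrightarrow> 0 \<le> costS r Dem d l (Acost \<epsilon> i) T S"
  unfolding costS_def Acost_def using routing_tree_weights Mth_pos[THEN less_imp_le]
  by (auto intro!: sum_nonneg)

lemma final_trees_buy_rent_step:
  assumes trees: "\<And>i. i \<le> K \<Longrightarrow> routing_tree E r Dem (T0 i)" and "i < K"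
  defines "Tf \<equiv> final_trees (\<lambda>i S. tree_cost i S) T0 K"
  shows "buy (Suc i) (Tf (Suc i)) \<le> buy i (Tf i)" and "rent i (Tf i) \<le> rent (Suc i) (Tf (Suc i))"
proof -
  have Tf_trees: "routing_tree E r Dem (Tf j)" for j
    unfolding Tf_def using trees by (rule final_trees_routing_tree)
  have "capped_cost l (flow r Dem d (Tf i)) (Mth \<epsilon> i) (Tf i)
      \<le> capped_cost l (flow r Dem d (Tf (Suc i))) (Mth \<epsilon> i) (Tf (Suc i))"
    and "capped_cost l (flow r Dem d (Tf (Suc i))) (Mth \<epsilon> (Suc i)) (Tf (Suc i))
      \<le> capped_cost l (flow r Dem d (Tf i)) (Mth \<epsilon> (Suc i)) (Tf i)"
    using final_trees_locally_optimal[OF \<open>i < K\<close>, of "\<lambda>i S. tree_cost i S" T0]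
    unfolding Tf_def cost_eq_capped_cost by simp_all
  then show "buy (Suc i) (Tf (Suc i)) \<le> buy i (Tf i)" and "rent i (Tf i) \<le> rent (Suc i) (Tf (Suc i))"
    using capped_cost_exchange[of "Tf i" l "flow r Dem d (Tf i)" "Tf (Suc i)" "flow r Dem d (Tf (Suc i))"
        "Mth \<epsilon> i" "Mth \<epsilon> (Suc i)"]
      routing_tree_weights[OF Tf_trees] Mth_pos Mth_less_Suc by simp_all
qed

lemma final_trees_cover:
  assumes trees: "\<And>i. i \<le> K \<Longrightarrow> routing_tree E r Dem (T0 i)"
    and "1 \<le> \<gamma>" "1 \<le> \<delta>" "k \<le> K"
  defines "Tf \<equiv> final_trees (\<lambda>i S. tree_cost i S) T0 K"
  shows "\<exists>i\<in>set (scan (\<lambda>i. rent i (Tf i)) \<delta> None (rev (scan (\<lambda>i. buy i (Tf i)) \<gamma> None [0..<K+1]))).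
           buy i (Tf i) \<le> \<gamma> * buy k (Tf k) \<and> rent i (Tf i) \<le> \<delta> * rent k (Tf k)"
proof (rule two_stage_scan_cover)
  have steps: "i \<in> {..<K} \<Longrightarrow> buy (Suc i) (Tf (Suc i)) \<le> buy i (Tf i) \<and> rent i (Tf i) \<le> rent (Suc i) (Tf (Suc i))"
    for i
    using final_trees_buy_rent_step[OF trees] unfolding Tf_def by auto
  show "buy j (Tf j) \<le> buy i (Tf i)" and "rent i (Tf i) \<le> rent j (Tf j)" if "i \<le> j" "j \<le> K" for i j
    using lift_Suc_antimono_le_ivl[of "{..<K}" "\<lambda>i. buy i (Tf i)" i j]
      lift_Suc_mono_le_ivl[of "{..<K}" "\<lambda>i. rent i (Tf i)" i j] steps that
    by (auto simp: subset_iff)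
  have "routing_tree E r Dem (Tf i)" for i
    unfolding Tf_def using trees by (rule final_trees_routing_tree)
  then show "0 \<le> buy i (Tf i)" and "0 \<le> rent i (Tf i)" for i
    by (simp_all add: buy_nonneg rent_nonneg)
qed (use assms in auto)

lemma tree_cost_partition_bound:
  assumes T: "routing_tree E r Dem T" and part: "TB \<union> TR = T" "TB \<inter> TR = {}" and "k \<le> K"
  shows "tree_cost k T \<le> Mth \<epsilon> k * costS r Dem d l (Acost \<epsilon> 0) T TB + costS r Dem d l (Acost \<epsilon> K) T TR"
proof -
  note weights = routing_tree_weights[OF T]
  have "tree_cost k T = costS r Dem d l (Acost \<epsilon> k) T TB + costS r Dem d l (Acost \<epsilon> k) T TR"
    unfolding costS_def using sum.union_disjoint[of TB TR] weights(1) part by auto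
  also have "costS r Dem d l (Acost \<epsilon> k) T TB \<le> Mth \<epsilon> k * costS r Dem d l (Acost \<epsilon> 0) T TB"
    unfolding costS_def sum_distrib_left
  proof (rule sum_mono)
    fix e assume "e \<in> TB"
    have "min (flow r Dem d T e) (Mth \<epsilon> k) \<le> Mth \<epsilon> k * min (flow r Dem d T e) 1"
      unfolding flow_eq_of_nat by (rule min_of_nat_le_mult) (use Mth_mono[of 0 k] in simp)
    then show "l e * Acost \<epsilon> k (flow r Dem d T e) \<le> Mth \<epsilon> k * (l e * Acost \<epsilon> 0 (flow r Dem d T e))"
      using weights(2)[of e] \<open>e \<in> TB\<close> part(1) unfolding Acost_def
      by (auto simp: mult.left_commute intro: mult_left_mono)
  qed
  also have "costS r Dem d l (Acost \<epsilon> k) T TR \<le> costS r Dem d l (Acost \<epsilon> K) T TR"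
    unfolding costS_def Acost_def
    using weights(2) part(1) Mth_mono[OF \<open>k \<le> K\<close>] by (auto intro!: sum_mono mult_left_mono)
  finally show ?thesis
    by simp
qed

lemma optimum_zero_if_rent_buy_zero:
  assumes "routing_tree E r Dem S" "rent i S = 0" "buy i S = 0"
    and "routing_tree E r Dem S'" "tree_cost k S' \<le> tree_cost k S"
  shows "tree_cost k S' = 0"
proof -
  have "tree_cost i S = 0"
    using tree_cost_split[OF assms(1)] assms(2,3) by simp
  then have "tree_cost k S = 0"
    by (rule tree_cost_eq_0_transfer[OF assms(1)])
  then show ?thesis
    using assms(5) tree_cost_nonneg[OF assms(4), of k] by simp
qed

lemma bound_by_covering_tree:
  assumes T: "routing_tree E r Dem T" and Si: "routing_tree E r Dem Si" and Sk: "routing_tree E r Dem Sk"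
    and opt: "routing_tree E r Dem Sopt" "\<And>S. routing_tree E r Dem S \<Longrightarrow> tree_cost k Sopt \<le> tree_cost k S"
    and approx: "tree_cost k Sk \<le> lam * tree_cost k Sopt"
    and cover: "buy i Si \<le> \<gamma> * buy k Sk" "rent i Si \<le> \<delta> * rent k Sk"
    and part: "TB \<union> TR = T" "TB \<inter> TR = {}" "k \<le> K"
    and TB: "costS r Dem d l (Acost \<epsilon> 0) T TB \<le> cB * buy i Si"
    and TR: "costS r Dem d l (Acost \<epsilon> K) T TR \<le> cR * rent i Si"
    and "0 < \<gamma>" "0 < \<delta>"
  shows "tree_cost k T \<le> max (cB * \<gamma>) (cR * \<delta>) * lam * tree_cost k Sopt"
proof -
  let ?m = "max (cB * \<gamma>) (cR * \<delta>)"
  have T_bound: "tree_cost k T \<le> Mth \<epsilon> k * (cB * buy i Si) + cR * rent i Si"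
    using tree_cost_partition_bound[OF T part] TB TR Mth_pos[of k] by (smt (verit) mult_left_mono)
  have TB_nonneg: "0 \<le> cB * buy i Si" and TR_nonneg: "0 \<le> cR * rent i Si"
    using costS_nonneg[OF T] part(1) TB TR by (smt (verit) Un_upper1 Un_upper2)+
  show ?thesis
  proof (cases "0 \<le> ?m")
    case True
    have "cB * buy i Si \<le> ?m * buy k Sk" and "cR * rent i Si \<le> ?m * rent k Sk"
      using mult_le_mult_of_scaled[OF buy_nonneg[OF Si] buy_nonneg[OF Sk] cover(1) _ True]
        mult_le_mult_of_scaled[OF rent_nonneg[OF Si] rent_nonneg[OF Sk] cover(2) _ True] by simp_all
    then have "tree_cost k T \<le> Mth \<epsilon> k * (?m * buy k Sk) + ?m * rent k Sk"
      using T_bound Mth_pos[of k] by (smt (verit) mult_left_mono)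
    also have "\<dots> = ?m * tree_cost k Sk"
      using tree_cost_split[OF Sk] by (simp add: algebra_simps)
    also have "\<dots> \<le> ?m * (lam * tree_cost k Sopt)"
      using approx True by (rule mult_left_mono)
    finally show ?thesis
      by (simp add: mult.assoc)
  next
    case False
    \<comment> \<open>Then the hypotheses force the covering tree, hence the optimum, to have cost zero.\<close>
    then have "cB < 0" "cR < 0"
      using \<open>0 < \<gamma>\<close> \<open>0 < \<delta>\<close> by (smt (verit) mult_nonneg_nonneg)+
    then have "buy i Si = 0" "rent i Si = 0"
      using TB_nonneg TR_nonneg buy_nonneg[OF Si, of i] rent_nonneg[OF Si, of i]
      by (simp_all add: zero_le_mult_iff)
    then have "tree_cost k Sopt = 0"
      using optimum_zero_if_rent_buy_zero[OF Si _ _ opt(1)] opt(2)[OF Si] by blast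
    moreover have "tree_cost k T \<le> 0"
      using T_bound \<open>buy i Si = 0\<close> \<open>rent i Si = 0\<close> by simp
    ultimately show ?thesis
      by simp
  qed
qed

end

theorem lemma5:
  fixes V :: "'a set" and E :: "'a set set" and l :: "'a set \<Rightarrow> real"
    and r :: 'a and Dem :: "'a set" and d :: "'a \<Rightarrow> nat"
    and \<epsilon> \<gamma> \<delta> lam :: real and K :: nat
    and Tstar T0 :: "nat \<Rightarrow> 'a set set"
    and T :: "'a set set" and cB cR :: real
  assumes finV: "finite V"
    and E_edges: "E \<subseteq> {e. e \<subseteq> V \<and> card e = 2}"
    and l_nonneg: "\<forall>e\<in>E. l e \<ge> 0"
    and r_in: "r \<in> V"
    and Dem_sub: "Dem \<subseteq> V" and Dem_ne: "Dem \<noteq> {}"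
    and d_pos: "\<forall>v\<in>Dem. d v > 0"
    and eps: "\<epsilon> > 0" and gam: "\<gamma> > 1" and del: "\<delta> > 1"
    and K_def: "K = nat \<lceil>log (1 + \<epsilon>) (real (\<Sum>v\<in>Dem. d v))\<rceil>"
    and Tstar_opt: "\<forall>i\<le>K. routing_tree E r Dem (Tstar i) \<and>
         (\<forall>T'. routing_tree E r Dem T' \<longrightarrow>
            cost r Dem d l (Acost \<epsilon> i) (Tstar i) \<le> cost r Dem d l (Acost \<epsilon> i) T')"
    and T0_approx: "\<forall>i\<le>K. routing_tree E r Dem (T0 i) \<and>
         (\<forall>T'. routing_tree E r Dem T' \<longrightarrow>
            cost r Dem d l (Acost \<epsilon> i) (T0 i) \<le> lam * cost r Dem d l (Acost \<epsilon> i) T')"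
    and T_tree: "routing_tree E r Dem T"
    and hyp: "let C = (\<lambda>i S. cost r Dem d l (Acost \<epsilon> i) S);
                  Tf = final_trees C T0 K;
                  Rv = (\<lambda>i. \<Sum>e\<in>{e\<in>Tf i. flow r Dem d (Tf i) e < Mth \<epsilon> i}.
                           l e * Acost \<epsilon> i (flow r Dem d (Tf i) e));
                  Bv = (\<lambda>i. \<Sum>e\<in>{e\<in>Tf i. flow r Dem d (Tf i) e \<ge> Mth \<epsilon> i}. l e);
                  LB = scan Bv \<gamma> None [0..<K+1];
                  L = scan Rv \<delta> None (rev LB)
              in \<forall>i\<in>set L. \<exists>TB TR. TB \<union> TR = T \<and> TB \<inter> TR = {} \<and>
                    costS r Dem d l (Acost \<epsilon> 0) T TB \<le> cB * Bv i \<and>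
                    costS r Dem d l (Acost \<epsilon> K) T TR \<le> cR * Rv i"
  shows "\<forall>k\<le>K. cost r Dem d l (Acost \<epsilon> k) T
                \<le> max (cB * \<gamma>) (cR * \<delta>) * lam * cost r Dem d l (Acost \<epsilon> k) (Tstar k)"
proof (intro allI impI)
  fix k assume "k \<le> K"
  interpret rent_or_buy_instance E r Dem d l \<epsilon>
    using l_nonneg eps by unfold_locales
  define Tf where "Tf = final_trees (\<lambda>i S. tree_cost i S) T0 K"
  have trees: "\<And>i. i \<le> K \<Longrightarrow> routing_tree E r Dem (T0 i)"
    using T0_approx by blast
  have Tf_trees: "routing_tree E r Dem (Tf i)" for i
    unfolding Tf_def using trees by (rule final_trees_routing_tree)
  obtain i where
    i: "i \<in> set (scan (\<lambda>i. rent i (Tf i)) \<delta> None (rev (scan (\<lambda>i. buy i (Tf i)) \<gamma> None [0..<K+1])))"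
    and cover: "buy i (Tf i) \<le> \<gamma> * buy k (Tf k)" "rent i (Tf i) \<le> \<delta> * rent k (Tf k)"
    using final_trees_cover[where ?T0.0 = T0, OF trees less_imp_le[OF gam] less_imp_le[OF del] \<open>k \<le> K\<close>]
    unfolding Tf_def by blast
  have "\<exists>TB TR. TB \<union> TR = T \<and> TB \<inter> TR = {} \<and>
      costS r Dem d l (Acost \<epsilon> 0) T TB \<le> cB * buy i (Tf i) \<and>
      costS r Dem d l (Acost \<epsilon> K) T TR \<le> cR * rent i (Tf i)"
    using hyp i unfolding Let_def Tf_def rent_cost_def norm_buy_cost_def Acost_def by (rule bspec)
  then obtain TB TR where part: "TB \<union> TR = T" "TB \<inter> TR = {}"
    and TB: "costS r Dem d l (Acost \<epsilon> 0) T TB \<le> cB * buy i (Tf i)"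
    and TR: "costS r Dem d l (Acost \<epsilon> K) T TR \<le> cR * rent i (Tf i)"
    by blast
  have opt: "routing_tree E r Dem (Tstar k)"
    "\<And>S. routing_tree E r Dem S \<Longrightarrow> tree_cost k (Tstar k) \<le> tree_cost k S"
    using Tstar_opt \<open>k \<le> K\<close> by auto
  have "tree_cost k (Tf k) \<le> tree_cost k (T0 k)"
    unfolding Tf_def by (rule final_trees_le_initial[OF \<open>k \<le> K\<close>])
  also have "\<dots> \<le> lam * tree_cost k (Tstar k)"
    using T0_approx opt(1) \<open>k \<le> K\<close> by blast
  finally have approx: "tree_cost k (Tf k) \<le> lam * tree_cost k (Tstar k)" .
  show "tree_cost k T \<le> max (cB * \<gamma>) (cR * \<delta>) * lam * tree_cost k (Tstar k)"
    by (rule bound_by_covering_tree[OF T_tree Tf_trees Tf_trees opt approx cover part \<open>k \<le> K\<close> TB TR])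
      (use gam del in simp_all)
qed

end
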